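(* For every $n\ge1$, the number of isomorphism classes of Nakayama algebras with $n$ simple modules having finite global dimension and magnitude one equals the Catalan number $C_n=\frac{1}{n+1}\binom{2n}{n}$.
   Context: Nakayama algebras are connected finite-dimensional algebras over an algebraically closed field $K$ all of whose indecomposable modules are uniserial, given as bound quiver algebras on a linear quiver $0\to\cdots\to n-1$ or cyclic quiver $0\to\cdots\to n-1\to 0$ with admissible relations; they are determined up to isomorphism by their Kupisch series $[c_0,\dots,c_{n-1}]$, $c_i=\dim_K e_iA$ (for cyclic ones, up to cyclic rotation). The Cartan matrix $\mathbf C_A$ has entries $\dim_K e_iAe_j$; for finite global dimension it is invertible, and the magnitude is the sum of all entries of $\mathbf C_A^{-1}$. *)

theory Defs
  imports "Jordan_Normal_Form.Gauss_Jordan_Elimination"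
begin

text \<open>Nakayama algebras are encoded by their Kupisch series c = [c_0,...,c_(n-1)],
  c_i = dim e_i A.  The flag cyc distinguishes the cyclic quiver (True) from the
  linear quiver (False).  Vertices are 0..n-1, arrows i -> i+1 (mod n if cyclic).\<close>

definition kupisch_linear :: "nat \<Rightarrow> nat list \<Rightarrow> bool" where
  "kupisch_linear n c \<longleftrightarrow> length c = n \<and> n \<ge> 1 \<and> c ! (n - 1) = 1 \<and>
     (\<forall>i. i + 1 < n \<longrightarrow> c ! i \<ge> 2 \<and> c ! (i + 1) \<ge> c ! i - 1)"

definition kupisch_cyclic :: "nat \<Rightarrow> nat list \<Rightarrow> bool" where
  "kupisch_cyclic n c \<longleftrightarrow> length c = n \<and> n \<ge> 1 \<and>
     (\<forall>i<n. c ! i \<ge> 2 \<and> c ! ((i + 1) mod n) \<ge> c ! i - 1)"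

definition step :: "bool \<Rightarrow> nat \<Rightarrow> nat \<Rightarrow> nat \<Rightarrow> nat" where
  "step cyc n i k = (if cyc then (i + k) mod n else i + k)"

text \<open>Cartan matrix: entry (i,j) = dim e_i A e_j = number of nonzero paths from i to j.\<close>
definition cartan :: "bool \<Rightarrow> nat \<Rightarrow> nat list \<Rightarrow> rat mat" where
  "cartan cyc n c = mat n n (\<lambda>(i, j). of_nat (card {k. k < c ! i \<and> step cyc n i k = j}))"

text \<open>Magnitude: sum of all entries of the inverse Cartan matrix (only meaningful
  when the Cartan matrix is invertible).\<close>
definition magnitude :: "rat mat \<Rightarrow> rat" where
  "magnitude C = (case mat_inverse C of
      Some B \<Rightarrow> (\<Sum>i<dim_row B. \<Sum>j<dim_col B. B $$ (i, j))
    | None \<Rightarrow> 0)"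

text \<open>Indecomposable (uniserial) modules are given by (top vertex i, length l),
  1 \<le> l \<le> c_i; l = 0 encodes the zero module.  The first syzygy of (i,l) is the
  kernel of the projective cover P_i = (i, c_i) -> (i,l), namely rad^l P_i,
  which is the uniserial module (i+l, c_i - l).\<close>
definition syzygy :: "bool \<Rightarrow> nat \<Rightarrow> nat list \<Rightarrow> nat \<times> nat \<Rightarrow> nat \<times> nat" where
  "syzygy cyc n c M = (case M of (i, l) \<Rightarrow>
      if l = 0 then (i, 0) else (step cyc n i l, c ! i - l))"

text \<open>Finite global dimension: every simple module S_i = (i,1) has finite projective
  dimension, i.e. some iterated syzygy vanishes.\<close>
definition finite_gldim :: "bool \<Rightarrow> nat \<Rightarrow> nat list \<Rightarrow> bool" where
  "finite_gldim cyc n c \<longleftrightarrow>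
     (\<forall>i<n. \<exists>k. snd ((syzygy cyc n c ^^ k) (i, 1)) = 0)"

definition good :: "bool \<Rightarrow> nat \<Rightarrow> nat list \<Rightarrow> bool" where
  "good cyc n c \<longleftrightarrow> finite_gldim cyc n c \<and> magnitude (cartan cyc n c) = 1"

text \<open>Isomorphism classes: linear Nakayama algebras are determined by their Kupisch
  series; cyclic ones by their Kupisch series up to cyclic rotation.  Linear and
  cyclic algebras are never isomorphic (different quivers), so we tag them.\<close>
definition nakayama_classes_good :: "nat \<Rightarrow> (bool \<times> nat list set) set" where
  "nakayama_classes_good n =
     {(False, {c}) | c. kupisch_linear n c \<and> good False n c} \<union>
     {(True, {rotate k c | k. True}) | c. kupisch_cyclic n c \<and> good True n c}"

definition catalan :: "nat \<Rightarrow> nat" where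
  "catalan n = ((2 * n) choose n) div (n + 1)"

end

theory Submission
  imports Defs "Jordan_Normal_Form.Determinant"
begin

text \<open>Magnitude one means that the solution \<open>z\<close> of \<open>C z = 1\<close> has total mass \<open>1\<close>, where
  row \<open>i\<close> of \<open>C z = 1\<close> says that the projective interval starting at \<open>i\<close> has mass \<open>1\<close>.
  For a linear quiver this forces \<open>c\<^sub>0 = n\<close>, so only the hereditary series
  \<open>[n, n - 1, \<dots>, 1]\<close> qualifies. For a cyclic quiver we pass to the universal cover \<open>\<nat>\<close>,
  where the projective at \<open>x\<close> ends at \<open>e x = x + c\<^bsub>x mod n\<^esub>\<close>: magnitude one gives a height
  function \<open>H\<close> with \<open>H (e x) = H x + 1 = H (x + n)\<close>, and finite global dimension says
  that the \<open>e\<close>-orbits of neighbouring points eventually meet. Together these are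
  equivalent to a vertex \<open>x\<^sub>0\<close> with \<open>c\<^bsub>x\<^sub>0\<^esub> = n\<close> that attracts every vertex under \<open>e\<close> mod \<open>n\<close>.
  Rotating \<open>x\<^sub>0\<close> to \<open>0\<close> gives a unique normal form in each class, and normal forms are in
  bijection with the weakly increasing sequences in \<open>[0, n]\<^sup>n\<^sup>-\<^sup>1\<close> avoiding \<open>x\<^sub>i = i + 1\<close>,
  except the zero sequence. These are counted by Catalan's triangle, so there are
  \<open>C\<^sub>n - 1\<close> cyclic classes besides the single linear one.\<close>

section \<open>Magnitude and the Cartan system\<close>

definition ones_vec :: "nat \<Rightarrow> rat vec" where
  "ones_vec n = vec n (\<lambda>_. 1)"

lemma cartan_carrier_mat: "cartan cyc n c \<in> carrier_mat n n"
  unfolding cartan_def by simp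

lemma sum_card_fibres:
  fixes w :: "nat \<Rightarrow> rat" and g :: "nat \<Rightarrow> nat"
  assumes "\<And>k. k < m \<Longrightarrow> g k < n"
  shows "(\<Sum>j<n. of_nat (card {k. k < m \<and> g k = j}) * w j) = (\<Sum>k<m. w (g k))"
proof -
  have "(\<Sum>k<m. w (g k)) = (\<Sum>j<n. \<Sum>k\<in>{x\<in>{..<m}. g x = j}. w (g k))"
    using assms by (intro sum.group[symmetric]) auto
  also have "\<dots> = (\<Sum>j<n. \<Sum>k\<in>{k. k < m \<and> g k = j}. w j)"
    by (intro sum.cong) auto
  also have "\<dots> = (\<Sum>j<n. of_nat (card {k. k < m \<and> g k = j}) * w j)"
    by simp
  finally show ?thesis by simp
qed

lemma cartan_mult_vec_nth:
  assumes "i < n" "z \<in> carrier_vec n" "\<And>k. k < c ! i \<Longrightarrow> step cyc n i k < n"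
  shows "(cartan cyc n c *\<^sub>v z) $ i = (\<Sum>k<c ! i. z $ step cyc n i k)"
proof -
  have "(cartan cyc n c *\<^sub>v z) $ i =
      (\<Sum>j<n. of_nat (card {k. k < c ! i \<and> step cyc n i k = j}) * z $ j)"
    using assms(1,2) unfolding cartan_def mult_mat_vec_def scalar_prod_def
    by (auto simp: atLeast0LessThan intro!: sum.cong)
  also have "\<dots> = (\<Sum>k<c ! i. z $ step cyc n i k)"
    by (rule sum_card_fibres) (use assms(3) in auto)
  finally show ?thesis .
qed

lemma magnitude_eq_sum_solution:
  assumes C: "C \<in> carrier_mat n n" and inv: "mat_inverse C = Some B"
  shows "C *\<^sub>v (B *\<^sub>v ones_vec n) = ones_vec n"
    and "magnitude C = (\<Sum>i<n. (B *\<^sub>v ones_vec n) $ i)"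
proof -
  from mat_inverse(2)[OF C inv] have CB: "C * B = 1\<^sub>m n" and B: "B \<in> carrier_mat n n"
    by auto
  have "C *\<^sub>v (B *\<^sub>v ones_vec n) = (C * B) *\<^sub>v ones_vec n"
    by (rule assoc_mult_mat_vec[symmetric]) (use C B in \<open>auto simp: ones_vec_def\<close>)
  then show "C *\<^sub>v (B *\<^sub>v ones_vec n) = ones_vec n"
    unfolding CB ones_vec_def by simp
  have "(B *\<^sub>v ones_vec n) $ i = (\<Sum>j<n. B $$ (i, j))" if "i < n" for i
    using that B unfolding ones_vec_def mult_mat_vec_def scalar_prod_def
    by (auto simp: atLeast0LessThan)
  then show "magnitude C = (\<Sum>i<n. (B *\<^sub>v ones_vec n) $ i)"
    unfolding magnitude_def inv using B by simp
qed

lemma magnitude_eq_1D: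
  assumes C: "C \<in> carrier_mat n n" and "magnitude C = 1"
  obtains z where "z \<in> carrier_vec n" "C *\<^sub>v z = ones_vec n" "(\<Sum>j<n. z $ j) = 1"
proof (cases "mat_inverse C")
  case None
  then show ?thesis using assms(2) unfolding magnitude_def by simp
next
  case (Some B)
  from mat_inverse(2)[OF C Some] have "B \<in> carrier_mat n n" by auto
  then show ?thesis
    using that[of "B *\<^sub>v ones_vec n"] magnitude_eq_sum_solution[OF C Some] assms(2)
    by (simp add: ones_vec_def)
qed

lemma magnitude_eq_1I:
  assumes C: "C \<in> carrier_mat n n"
    and inj: "\<And>z. z \<in> carrier_vec n \<Longrightarrow> C *\<^sub>v z = 0\<^sub>v n \<Longrightarrow> z = 0\<^sub>v n"
    and sum_1: "\<And>z. z \<in> carrier_vec n \<Longrightarrow> C *\<^sub>v z = ones_vec n \<Longrightarrow> (\<Sum>j<n. z $ j) = 1"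
  shows "magnitude C = 1"
proof -
  have "det C \<noteq> 0" using det_0_iff_vec_prod_zero[OF C] inj by blast
  then have "C \<in> Units (ring_mat TYPE(rat) n ())" by (rule det_non_zero_imp_unit[OF C])
  then obtain B where inv: "mat_inverse C = Some B"
    using mat_inverse(1)[OF C, of "()"] by (cases "mat_inverse C") auto
  from mat_inverse(2)[OF C inv] have "B *\<^sub>v ones_vec n \<in> carrier_vec n"
    by (auto simp: ones_vec_def)
  from sum_1[OF this magnitude_eq_sum_solution(1)[OF C inv]] show ?thesis
    unfolding magnitude_eq_sum_solution(2)[OF C inv] .
qed

section \<open>Linear Nakayama algebras\<close>

definition hereditary_kupisch :: "nat \<Rightarrow> nat list" where
  "hereditary_kupisch n = map (\<lambda>i. n - i) [0..<n]"

definition prefix_sum :: "rat vec \<Rightarrow> nat \<Rightarrow> rat" where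
  "prefix_sum z x = (\<Sum>y<x. z $ y)"

lemma prefix_sum_add: "prefix_sum z (x + m) = prefix_sum z x + (\<Sum>k<m. z $ (x + k))"
  by (induction m) (auto simp: prefix_sum_def)

lemma hereditary_kupisch_nth: "i < n \<Longrightarrow> hereditary_kupisch n ! i = n - i"
  by (simp add: hereditary_kupisch_def)

lemma kupisch_linear_hereditary: "n \<ge> 1 \<Longrightarrow> kupisch_linear n (hereditary_kupisch n)"
  unfolding kupisch_linear_def
  by (auto simp: hereditary_kupisch_nth) (simp add: hereditary_kupisch_def)

lemma kupisch_linear_bound:
  assumes "kupisch_linear n c" "i < n"
  shows "i + c ! i \<le> n" "c ! i \<ge> 1"
proof -
  have "i + c ! i \<le> n \<and> c ! i \<ge> 1"
    using assms(2)
  proof (induction "n - i" arbitrary: i rule: less_induct)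
    case less
    show ?case
    proof (cases "i + 1 < n")
      case True
      then have "c ! i \<ge> 2" "c ! (i + 1) \<ge> c ! i - 1" "i + 1 + c ! (i + 1) \<le> n"
        using assms(1) less.hyps[of "i + 1"] unfolding kupisch_linear_def by auto
      then show ?thesis by simp
    next
      case False
      then have "i = n - 1" using less.prems by simp
      then show ?thesis using assms(1) less.prems unfolding kupisch_linear_def by auto
    qed
  qed
  then show "i + c ! i \<le> n" "c ! i \<ge> 1" by auto
qed

lemma cartan_linear_mult_vec_nth:
  assumes "kupisch_linear n c" "z \<in> carrier_vec n" "i < n"
  shows "(cartan False n c *\<^sub>v z) $ i = prefix_sum z (i + c ! i) - prefix_sum z i"
proof -
  have "(cartan False n c *\<^sub>v z) $ i = (\<Sum>k<c ! i. z $ step False n i k)"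
    by (rule cartan_mult_vec_nth[OF assms(3,2)])
      (use kupisch_linear_bound[OF assms(1,3)] in \<open>auto simp: step_def\<close>)
  then show ?thesis unfolding prefix_sum_add by (simp add: step_def)
qed

text \<open>With \<open>P = prefix_sum z\<close> for the solution of \<open>C z = 1\<close>, every projective interval
  \<open>[i, i + c\<^sub>i)\<close> has \<open>P\<close>-length \<open>1\<close>; chaining them from any \<open>x < n\<close> to \<open>n\<close> shows
  \<open>P n - P x \<ge> 1\<close>. Since \<open>P n - P 0 = 1\<close>, the first interval must already reach \<open>n\<close>.\<close>

lemma good_linear_imp_c0:
  assumes kupisch: "kupisch_linear n c" and "good False n c"
  shows "c ! 0 = n"
proof -
  obtain z where z: "z \<in> carrier_vec n" "cartan False n c *\<^sub>v z = ones_vec n"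
    and sum_1: "(\<Sum>j<n. z $ j) = 1"
    using magnitude_eq_1D[OF cartan_carrier_mat] assms(2) unfolding good_def by blast
  have interval: "prefix_sum z (i + c ! i) = prefix_sum z i + 1" if "i < n" for i
    using cartan_linear_mult_vec_nth[OF kupisch z(1) that] z(2) that by (simp add: ones_vec_def)
  have chain: "prefix_sum z n - prefix_sum z x \<ge> 1" if "x < n" for x
    using that
  proof (induction "n - x" arbitrary: x rule: less_induct)
    case less
    show ?case
    proof (cases "x + c ! x = n")
      case True
      then show ?thesis using interval[OF less.prems] by simp
    next
      case False
      then have "x + c ! x < n" "x < x + c ! x"
        using kupisch_linear_bound[OF kupisch less.prems] by auto
      then have "1 \<le> prefix_sum z n - prefix_sum z (x + c ! x)" by (intro less.hyps) auto
      then show ?thesis using interval[OF less.prems] by simp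
    qed
  qed
  have n_pos: "n \<ge> 1" using kupisch unfolding kupisch_linear_def by simp
  have "prefix_sum z n = 1" "prefix_sum z 0 = 0" using sum_1 by (simp_all add: prefix_sum_def)
  then show ?thesis
    using chain[of "c ! 0"] interval[of 0] kupisch_linear_bound[OF kupisch, of 0] n_pos
    by (cases "c ! 0 < n") auto
qed

lemma kupisch_linear_c0_imp_hereditary:
  assumes kupisch: "kupisch_linear n c" and c0: "c ! 0 = n"
  shows "c = hereditary_kupisch n"
proof -
  have lower: "c ! i \<ge> n - i" if "i < n" for i
    using that
  proof (induction i)
    case (Suc i)
    then have "c ! (i + 1) \<ge> c ! i - 1" using kupisch unfolding kupisch_linear_def by auto
    then show ?case using Suc by simp
  qed (simp add: c0)
  show ?thesis
  proof (rule nth_equalityI)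
    show "length c = length (hereditary_kupisch n)"
      using kupisch unfolding kupisch_linear_def hereditary_kupisch_def by simp
    fix i
    assume "i < length c"
    then have i: "i < n" using kupisch unfolding kupisch_linear_def by simp
    show "c ! i = hereditary_kupisch n ! i"
      using lower[OF i] kupisch_linear_bound(1)[OF kupisch i] i
      by (simp add: hereditary_kupisch_nth)
  qed
qed

lemma good_hereditary:
  assumes n_pos: "n \<ge> 1"
  shows "good False n (hereditary_kupisch n)"
proof -
  have kupisch: "kupisch_linear n (hereditary_kupisch n)"
    by (rule kupisch_linear_hereditary[OF n_pos])
  have row: "(cartan False n (hereditary_kupisch n) *\<^sub>v z) $ i = prefix_sum z n - prefix_sum z i"
    if "z \<in> carrier_vec n" "i < n" for z i
    using cartan_linear_mult_vec_nth[OF kupisch that] that(2) by (simp add: hereditary_kupisch_nth)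
  have "snd ((syzygy False n (hereditary_kupisch n) ^^ 2) (i, 1)) = 0" if "i < n" for i
    using that by (cases "i + 1 < n")
      (simp_all add: syzygy_def step_def hereditary_kupisch_nth numeral_2_eq_2)
  then have "finite_gldim False n (hereditary_kupisch n)"
    unfolding finite_gldim_def by blast
  moreover have "magnitude (cartan False n (hereditary_kupisch n)) = 1"
  proof (rule magnitude_eq_1I[OF cartan_carrier_mat])
    fix z :: "rat vec"
    assume z: "z \<in> carrier_vec n"
    {
      assume zero: "cartan False n (hereditary_kupisch n) *\<^sub>v z = 0\<^sub>v n"
      have const: "prefix_sum z i = prefix_sum z n" if "i \<le> n" for i
      proof (cases "i = n")
        case False
        then have "i < n" using that by simp
        with row[OF z this] zero show ?thesis by simp
      qed simp
      show "z = 0\<^sub>v n"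
      proof (rule eq_vecI)
        fix j
        assume "j < dim_vec (0\<^sub>v n :: rat vec)"
        then show "z $ j = 0\<^sub>v n $ j"
          using const[of j] const[of "Suc j"] by (simp add: prefix_sum_def)
      qed (use z in simp)
    next
      assume "cartan False n (hereditary_kupisch n) *\<^sub>v z = ones_vec n"
      then show "(\<Sum>j<n. z $ j) = 1"
        using row[OF z, of 0] n_pos by (simp add: ones_vec_def prefix_sum_def)
    }
  qed
  ultimately show ?thesis unfolding good_def by simp
qed

lemma good_linear_classes:
  assumes "n \<ge> 1"
  shows "{(False, {c}) | c. kupisch_linear n c \<and> good False n c} =
    {(False, {hereditary_kupisch n})}"
  using good_linear_imp_c0 kupisch_linear_c0_imp_hereditary
    kupisch_linear_hereditary[OF assms] good_hereditary[OF assms] by blast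

section \<open>Cyclic Nakayama algebras on the universal cover\<close>

text \<open>On the universal cover \<open>\<nat>\<close> of the cyclic quiver, the indecomposable projective at
  \<open>x\<close> is the interval \<open>[x, proj_end n c x)\<close>; \<open>proj_end_mod\<close> is its end vertex mod \<open>n\<close>.\<close>

definition proj_end :: "nat \<Rightarrow> nat list \<Rightarrow> nat \<Rightarrow> nat" where
  "proj_end n c x = x + c ! (x mod n)"

definition proj_end_mod :: "nat \<Rightarrow> nat list \<Rightarrow> nat \<Rightarrow> nat" where
  "proj_end_mod n c y = (y + c ! y) mod n"

definition periodic_prefix_sum :: "nat \<Rightarrow> rat vec \<Rightarrow> nat \<Rightarrow> rat" where
  "periodic_prefix_sum n z x = (\<Sum>y<x. z $ (y mod n))"

lemma periodic_prefix_sum_add: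
  "periodic_prefix_sum n z (x + m) = periodic_prefix_sum n z x + (\<Sum>k<m. z $ ((x + k) mod n))"
  by (induction m) (auto simp: periodic_prefix_sum_def)

lemma periodic_prefix_sum_add_n:
  "periodic_prefix_sum n z (x + n) = periodic_prefix_sum n z x + (\<Sum>j<n. z $ j)"
  by (induction x) (simp_all add: periodic_prefix_sum_def)

lemma periodic_prefix_sum_add_mult:
  "periodic_prefix_sum n z (x + q * n) = periodic_prefix_sum n z x + of_nat q * (\<Sum>j<n. z $ j)"
proof (induction q)
  case (Suc q)
  then show ?case
    using periodic_prefix_sum_add_n[of n z "x + q * n"] by (simp add: algebra_simps)
qed simp

lemma mod_eq_imp_eq_or_eq_add:
  fixes a b n :: nat
  assumes "a \<le> b" "b \<le> a + n" "a mod n = b mod n"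
  shows "b = a \<or> b = a + n"
proof -
  obtain q where q: "b - a = n * q"
    using assms(1,3) mod_eq_dvd_iff_nat[of a b n] by (auto elim: dvdE)
  then have "n * q \<le> n" using assms(1,2) by linarith
  then have "q = 0 \<or> q = 1 \<or> n = 0" by (cases q) auto
  then show ?thesis using q assms by auto
qed

text \<open>\<open>c\<^bsub>x\<^sub>0\<^esub> = n\<close> says precisely that \<open>x\<^sub>0\<close> is a fixed point of \<open>proj_end_mod n c\<close>.\<close>

definition global_attractor :: "nat \<Rightarrow> nat list \<Rightarrow> nat \<Rightarrow> bool" where
  "global_attractor n c x0 \<longleftrightarrow>
     x0 < n \<and> c ! x0 = n \<and> (\<forall>y<n. \<exists>m. (proj_end_mod n c ^^ m) y = x0)"

locale cyclic_kupisch =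
  fixes n :: nat and c :: "nat list"
  assumes kupisch: "kupisch_cyclic n c"
begin

abbreviation "e \<equiv> proj_end n c"
abbreviation "ebar \<equiv> proj_end_mod n c"
abbreviation "H \<equiv> periodic_prefix_sum n"

lemma n_pos: "n \<ge> 1" and length_c: "length c = n"
  using kupisch unfolding kupisch_cyclic_def by auto

lemma c_ge_2: "i < n \<Longrightarrow> c ! i \<ge> 2"
  using kupisch unfolding kupisch_cyclic_def by auto

lemma c_le_next: "i < n \<Longrightarrow> c ! i \<le> c ! ((i + 1) mod n) + 1"
  using kupisch unfolding kupisch_cyclic_def by force

lemma e_less: "x < n \<Longrightarrow> e x = x + c ! x"
  unfolding proj_end_def by simp

lemma e_le_e_Suc: "e x \<le> e (Suc x)"
proof -
  have "Suc x mod n = (x mod n + 1) mod n" by (simp add: mod_Suc_eq)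
  then show ?thesis using c_le_next[of "x mod n"] n_pos unfolding proj_end_def by simp
qed

lemma e_mono: "x \<le> y \<Longrightarrow> e x \<le> e y"
  using e_le_e_Suc by (rule lift_Suc_mono_le)

lemma e_ge: "x + 2 \<le> e x"
  using c_ge_2[of "x mod n"] n_pos unfolding proj_end_def by simp

lemma e_add_mult: "e (x + q * n) = e x + q * n"
  unfolding proj_end_def by simp

lemma e_mod: "e x mod n = ebar (x mod n)"
  unfolding proj_end_def proj_end_mod_def by (simp add: mod_add_left_eq)

lemma e_funpow_mono: "x \<le> y \<Longrightarrow> (e ^^ m) x \<le> (e ^^ m) y"
  by (induction m) (auto intro: e_mono)

lemma e_funpow_add_n: "(e ^^ m) (x + n) = (e ^^ m) x + n"
  by (induction m) (use e_add_mult[where q = 1] in auto)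

lemma e_funpow_mod: "(e ^^ m) x mod n = (ebar ^^ m) (x mod n)"
  by (induction m) (auto simp: e_mod)

lemma e_funpow_strict_mono: "j < j' \<Longrightarrow> (e ^^ j) u < (e ^^ j') u"
proof (induction j' arbitrary: j)
  case (Suc j')
  have "(e ^^ j') u < (e ^^ Suc j') u" using e_ge[of "(e ^^ j') u"] by simp
  with Suc show ?case by (metis less_SucE order.strict_trans)
qed simp

lemma H_e:
  assumes "z \<in> carrier_vec n"
  shows "H z (e x) = H z x + (cartan True n c *\<^sub>v z) $ (x mod n)"
proof -
  have "(cartan True n c *\<^sub>v z) $ (x mod n) = (\<Sum>k<c ! (x mod n). z $ step True n (x mod n) k)"
    by (rule cartan_mult_vec_nth) (use n_pos assms in \<open>auto simp: step_def\<close>)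
  also have "\<dots> = (\<Sum>k<c ! (x mod n). z $ ((x + k) mod n))"
    by (simp add: step_def mod_add_left_eq)
  finally show ?thesis unfolding proj_end_def periodic_prefix_sum_add by simp
qed

text \<open>The \<open>2m\<close>-th and \<open>(2m+1)\<close>-st syzygies of the simple module at \<open>i\<close> are the
  intervals \<open>[e\<^sup>m i, e\<^sup>m (i+1))\<close> and \<open>[e\<^sup>m (i+1), e\<^sup>m\<^sup>+\<^sup>1 i)\<close> of the cover.\<close>

primrec syzygy_interval :: "nat \<Rightarrow> nat \<Rightarrow> nat \<times> nat" where
  "syzygy_interval i 0 = (i, Suc i)"
| "syzygy_interval i (Suc k) = (snd (syzygy_interval i k), e (fst (syzygy_interval i k)))"

definition merges :: "nat \<Rightarrow> nat \<Rightarrow> bool" where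
  "merges i m \<longleftrightarrow> (e ^^ m) i = (e ^^ m) (Suc i) \<or> (e ^^ m) (Suc i) = (e ^^ Suc m) i"

lemma syzygy_interval_even_odd:
  "syzygy_interval i (2 * m) = ((e ^^ m) i, (e ^^ m) (Suc i))"
  "syzygy_interval i (Suc (2 * m)) = ((e ^^ m) (Suc i), (e ^^ Suc m) i)"
  by (induction m) auto

lemma syzygy_interval_ordered:
  "fst (syzygy_interval i k) \<le> snd (syzygy_interval i k) \<and>
   snd (syzygy_interval i k) \<le> e (fst (syzygy_interval i k))"
proof (induction k)
  case 0
  then show ?case using e_ge[of i] by simp
next
  case (Suc k)
  then show ?case using e_mono by auto
qed

lemma syzygy_funpow_simple:
  assumes "\<forall>j<k. fst (syzygy_interval i j) \<noteq> snd (syzygy_interval i j)"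
  shows "(syzygy True n c ^^ k) (i mod n, 1) =
    (fst (syzygy_interval i k) mod n, snd (syzygy_interval i k) - fst (syzygy_interval i k))"
  using assms
proof (induction k)
  case (Suc k)
  obtain a b where ab: "syzygy_interval i k = (a, b)" by (cases "syzygy_interval i k")
  have "a \<noteq> b" using Suc.prems ab by (metis fst_conv lessI snd_conv)
  have ordered: "a \<le> b" "b \<le> e a" using syzygy_interval_ordered[of i k] ab by auto
  have "(syzygy True n c ^^ Suc k) (i mod n, 1) = syzygy True n c (a mod n, b - a)"
    using Suc ab by auto
  also have "\<dots> = (b mod n, e a - b)"
  proof -
    have "(a mod n + (b - a)) mod n = b mod n"
      using ordered(1) by (metis le_add_diff_inverse mod_add_left_eq)
    moreover have "c ! (a mod n) - (b - a) = e a - b"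
      using ordered unfolding proj_end_def by simp
    ultimately show ?thesis using \<open>a \<noteq> b\<close> ordered by (simp add: syzygy_def step_def)
  qed
  finally show ?case using ab by simp
qed simp

lemma merges_iff_degenerate_interval:
  "(\<exists>m. merges i m) \<longleftrightarrow> (\<exists>k. fst (syzygy_interval i k) = snd (syzygy_interval i k))"
proof
  assume "\<exists>k. fst (syzygy_interval i k) = snd (syzygy_interval i k)"
  then obtain k where k: "fst (syzygy_interval i k) = snd (syzygy_interval i k)" by blast
  have "k = 2 * (k div 2) \<or> k = Suc (2 * (k div 2))" by presburger
  then have "merges i (k div 2)"
    using k syzygy_interval_even_odd[of i "k div 2"] unfolding merges_def
    by (metis fst_conv snd_conv)
  then show "\<exists>m. merges i m" by blast
next
  assume "\<exists>m. merges i m"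
  then show "\<exists>k. fst (syzygy_interval i k) = snd (syzygy_interval i k)"
    unfolding merges_def by (metis fst_conv snd_conv syzygy_interval_even_odd)
qed

lemma finite_gldim_iff_merges: "finite_gldim True n c \<longleftrightarrow> (\<forall>i<n. \<exists>m. merges i m)"
proof -
  have "(\<exists>k. snd ((syzygy True n c ^^ k) (i, 1)) = 0) \<longleftrightarrow> (\<exists>m. merges i m)" if i: "i < n" for i
  proof
    assume "\<exists>k. snd ((syzygy True n c ^^ k) (i, 1)) = 0"
    then obtain k where k: "snd ((syzygy True n c ^^ k) (i, 1)) = 0" by blast
    have "\<exists>k. fst (syzygy_interval i k) = snd (syzygy_interval i k)"
    proof (rule ccontr)
      assume "\<not> ?thesis"
      then show False
        using syzygy_funpow_simple[of k i] syzygy_interval_ordered[of i k] k i by simp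
    qed
    then show "\<exists>m. merges i m" using merges_iff_degenerate_interval by blast
  next
    assume "\<exists>m. merges i m"
    then have ex: "\<exists>k. fst (syzygy_interval i k) = snd (syzygy_interval i k)"
      using merges_iff_degenerate_interval by blast
    define k where "k = (LEAST k. fst (syzygy_interval i k) = snd (syzygy_interval i k))"
    have "fst (syzygy_interval i k) = snd (syzygy_interval i k)"
      unfolding k_def by (rule LeastI_ex[OF ex])
    moreover have "\<forall>j<k. fst (syzygy_interval i j) \<noteq> snd (syzygy_interval i j)"
      unfolding k_def using not_less_Least by blast
    ultimately have "snd ((syzygy True n c ^^ k) (i, 1)) = 0"
      using syzygy_funpow_simple[of k i] i by simp
    then show "\<exists>k. snd ((syzygy True n c ^^ k) (i, 1)) = 0" by blast
  qed
  then show ?thesis unfolding finite_gldim_def by blast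
qed

lemma merges_mono:
  assumes "merges i m" "m \<le> m'"
  shows "merges i m'"
  using assms(2,1)
proof (induction rule: dec_induct)
  case (step m)
  then show ?case unfolding merges_def by (metis funpow.simps(2) o_apply)
qed

lemma finite_gldim_imp_merges_uniformly:
  assumes "finite_gldim True n c"
  obtains M where "\<forall>i<n. merges i M"
proof -
  obtain f where f: "\<forall>i<n. merges i (f i)"
    using assms unfolding finite_gldim_iff_merges by metis
  have "f i \<le> (\<Sum>j<n. f j)" if "i < n" for i
    using that by (intro member_le_sum) auto
  then show ?thesis using that f merges_mono by blast
qed

lemma magnitude_eq_1_imp_height:
  assumes "magnitude (cartan True n c) = 1"
  obtains z where "\<And>x. H z (e x) = H z x + 1" "\<And>x. H z (x + n) = H z x + 1"
proof -
  obtain z where z: "z \<in> carrier_vec n" "cartan True n c *\<^sub>v z = ones_vec n"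
    and sum_1: "(\<Sum>j<n. z $ j) = 1"
    using magnitude_eq_1D[OF cartan_carrier_mat assms] by blast
  have "H z (e x) = H z x + 1" for x
    using H_e[OF z(1), of x] z(2) n_pos by (simp add: ones_vec_def)
  moreover have "H z (x + n) = H z x + 1" for x
    using periodic_prefix_sum_add_n[of n z x] sum_1 by simp
  ultimately show ?thesis using that by blast
qed

lemma merges_imp_orbit:
  assumes "\<forall>i<n. merges i M" "y \<le> n"
  shows "\<exists>j. (e ^^ M) y = (e ^^ j) ((e ^^ M) 0)"
  using assms(2)
proof (induction y)
  case 0
  show ?case by (rule exI[of _ 0]) simp
next
  case (Suc y)
  then obtain j where j: "(e ^^ M) y = (e ^^ j) ((e ^^ M) 0)" by auto
  have "merges y M" using assms(1) Suc.prems by simp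
  then have "(e ^^ M) (Suc y) = (e ^^ M) y \<or> (e ^^ M) (Suc y) = e ((e ^^ M) y)"
    unfolding merges_def by auto
  then show ?case
    using j by (metis comp_apply funpow.simps(2))
qed

lemma good_imp_global_attractor:
  assumes "good True n c"
  shows "\<exists>x0. global_attractor n c x0"
proof -
  obtain z where H_e: "\<And>x. H z (e x) = H z x + 1" and H_n: "\<And>x. H z (x + n) = H z x + 1"
    using magnitude_eq_1_imp_height assms unfolding good_def by blast
  have H_funpow: "H z ((e ^^ j) x) = H z x + of_nat j" for j x
    by (induction j) (auto simp: H_e)
  obtain M where M: "\<forall>i<n. merges i M"
    using finite_gldim_imp_merges_uniformly assms unfolding good_def by blast
  define u where "u = (e ^^ M) 0"
  obtain j where j: "(e ^^ M) n = (e ^^ j) u"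
    using merges_imp_orbit[OF M] unfolding u_def by blast
  have u_n: "(e ^^ M) n = u + n"
    using e_funpow_add_n[of M 0] unfolding u_def by simp
  \<comment> \<open>\<open>e\<^sup>M n = u + n\<close> lies one height unit above \<open>u\<close>, hence exactly one \<open>e\<close>-step above it.\<close>
  have "j = 1" using H_funpow[of j u] H_n[of u] j u_n by simp
  then have e_u: "e u = u + n" using j u_n by simp
  have "(ebar ^^ M) y = u mod n" if y: "y < n" for y
  proof -
    obtain j' where j': "(e ^^ M) y = (e ^^ j') u"
      using merges_imp_orbit[OF M] y unfolding u_def by fastforce
    have "(e ^^ j') u \<le> (e ^^ 1) u"
      using e_funpow_mono[of y n M] y j j' \<open>j = 1\<close> by simp
    then have "j' \<le> 1" using e_funpow_strict_mono[of 1 j' u] by linarith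
    then have "(e ^^ M) y mod n = u mod n" using j' e_u by (cases j') auto
    then show ?thesis using e_funpow_mod[of M y] y by simp
  qed
  moreover have "c ! (u mod n) = n" using e_u unfolding proj_end_def by simp
  ultimately have "global_attractor n c (u mod n)"
    unfolding global_attractor_def using n_pos by auto
  then show ?thesis by blast
qed

lemma global_attractor_eventually:
  assumes "global_attractor n c x0"
  obtains M where "\<And>m. M \<le> m \<Longrightarrow> (e ^^ m) x mod n = x0"
proof -
  have e_x0: "e w = w + n" if "w mod n = x0" for w
    using that assms unfolding global_attractor_def proj_end_def by simp
  obtain M where M: "(ebar ^^ M) (x mod n) = x0"
    using assms n_pos unfolding global_attractor_def by fastforce
  have "(e ^^ (M + k)) x mod n = x0" for k
    by (induction k) (use M e_funpow_mod e_x0 in auto)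
  then show ?thesis using that by (metis le_Suc_ex)
qed

lemma global_attractor_imp_finite_gldim:
  assumes "global_attractor n c x0"
  shows "finite_gldim True n c"
  unfolding finite_gldim_iff_merges
proof (intro allI impI)
  fix i
  obtain M1 where M1: "\<And>m. M1 \<le> m \<Longrightarrow> (e ^^ m) i mod n = x0"
    using global_attractor_eventually[OF assms] by blast
  obtain M2 where M2: "\<And>m. M2 \<le> m \<Longrightarrow> (e ^^ m) (Suc i) mod n = x0"
    using global_attractor_eventually[OF assms] by blast
  define m where "m = max M1 M2"
  have e_x0: "e w = w + n" if "w mod n = x0" for w
    using that assms unfolding global_attractor_def proj_end_def by simp
  have "(e ^^ m) i \<le> (e ^^ m) (Suc i)" by (rule e_funpow_mono) simp
  moreover have "(e ^^ m) (Suc i) \<le> (e ^^ m) i + n"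
  proof -
    have "(e ^^ m) (Suc i) \<le> (e ^^ m) (e i)" by (rule e_funpow_mono) (use e_ge[of i] in simp)
    also have "\<dots> = e ((e ^^ m) i)" by (simp add: funpow_swap1)
    also have "\<dots> = (e ^^ m) i + n" using e_x0 M1 by (simp add: m_def)
    finally show ?thesis .
  qed
  ultimately have "(e ^^ m) (Suc i) = (e ^^ m) i \<or> (e ^^ m) (Suc i) = (e ^^ m) i + n"
    using M1 M2 by (intro mod_eq_imp_eq_or_eq_add) (simp_all add: m_def)
  then have "merges i m" unfolding merges_def using e_x0 M1 by (auto simp: m_def)
  then show "\<exists>m. merges i m" by blast
qed

lemma global_attractor_imp_magnitude_eq_1:
  assumes "global_attractor n c x0"
  shows "magnitude (cartan True n c) = 1"
proof (rule magnitude_eq_1I[OF cartan_carrier_mat])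
  have x0: "x0 < n" and e_x0: "e x0 = x0 + n"
    using assms unfolding global_attractor_def proj_end_def by auto
  fix z :: "rat vec"
  assume z: "z \<in> carrier_vec n"
  {
    assume "cartan True n c *\<^sub>v z = ones_vec n"
    then have "H z (e x0) = H z x0 + 1" using H_e[OF z, of x0] x0 by (simp add: ones_vec_def)
    then show "(\<Sum>j<n. z $ j) = 1" using e_x0 periodic_prefix_sum_add_n[of n z x0] by simp
  next
    assume "cartan True n c *\<^sub>v z = 0\<^sub>v n"
    then have H_e0: "H z (e x) = H z x" for x using H_e[OF z, of x] n_pos by simp
    then have H_funpow: "H z ((e ^^ j) x) = H z x" for j x by (induction j) auto
    have sum_0: "(\<Sum>j<n. z $ j) = 0"
      using H_e0[of x0] e_x0 periodic_prefix_sum_add_n[of n z x0] by simp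
    have H_const: "H z y = H z x0" for y
    proof -
      obtain M where "(e ^^ M) y mod n = x0"
        using global_attractor_eventually[OF assms] by blast
      then have "(e ^^ M) y = x0 + ((e ^^ M) y div n) * n" by (metis mod_div_mult_eq add.commute)
      then have "H z ((e ^^ M) y) = H z (x0 + ((e ^^ M) y div n) * n)" by (rule arg_cong)
      also have "\<dots> = H z x0" by (simp add: periodic_prefix_sum_add_mult sum_0)
      finally show ?thesis using H_funpow[of M y] by simp
    qed
    show "z = 0\<^sub>v n"
    proof (rule eq_vecI)
      fix j
      assume "j < dim_vec (0\<^sub>v n :: rat vec)"
      then show "z $ j = 0\<^sub>v n $ j"
        using H_const[of "Suc j"] H_const[of j] by (simp add: periodic_prefix_sum_def)
    qed (use z in simp)
  }
qed

lemma good_cyclic_iff: "good True n c \<longleftrightarrow> (\<exists>x0. global_attractor n c x0)"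
  using good_imp_global_attractor global_attractor_imp_finite_gldim
    global_attractor_imp_magnitude_eq_1 unfolding good_def by blast

end

section \<open>Normal forms of cyclic Kupisch series\<close>

lemma mono_orbit_reaches_end:
  fixes f :: "nat \<Rightarrow> nat"
  assumes mono: "\<And>x y. x \<le> y \<Longrightarrow> y \<le> N \<Longrightarrow> f x \<le> f y"
    and f_0: "f 0 = 0" and f_N: "f N = N"
    and no_fix: "\<And>x. 0 < x \<Longrightarrow> x < N \<Longrightarrow> f x \<noteq> x"
    and x: "x \<le> N"
  shows "\<exists>m. (f ^^ m) x = 0 \<or> (f ^^ m) x = N"
proof -
  have down: "\<exists>m. (f ^^ m) x = 0" if "x \<le> N" "f x < x" for x
    using that
  proof (induction x rule: less_induct)
    case (less x)
    show ?case
    proof (cases "f x = 0")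
      case True
      then show ?thesis by (intro exI[of _ 1]) simp
    next
      case False
      have "f (f x) \<le> f x" using mono[of "f x" x] less.prems by simp
      moreover have "f (f x) \<noteq> f x" using no_fix[of "f x"] False less.prems by simp
      ultimately obtain m where "(f ^^ m) (f x) = 0" using less.IH[of "f x"] less.prems by auto
      then show ?thesis by (metis funpow_Suc_right o_apply)
    qed
  qed
  have up: "\<exists>m. (f ^^ m) x = N" if "x \<le> N" "x < f x" for x
    using that
  proof (induction "N - x" arbitrary: x rule: less_induct)
    case less
    have "f x \<le> N" using mono[of x N] less.prems f_N by simp
    show ?case
    proof (cases "f x = N")
      case True
      then show ?thesis by (intro exI[of _ 1]) simp
    next
      case False
      have "f x \<le> f (f x)" using mono[of x "f x"] \<open>f x \<le> N\<close> less.prems by simp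
      moreover have "f (f x) \<noteq> f x" using no_fix[of "f x"] False less.prems \<open>f x \<le> N\<close> by simp
      ultimately obtain m where "(f ^^ m) (f x) = N"
        using less.hyps[of "f x"] less.prems \<open>f x \<le> N\<close> by fastforce
      then show ?thesis by (metis funpow_Suc_right o_apply)
    qed
  qed
  show ?thesis
  proof (cases "x = 0 \<or> x = N")
    case True
    then show ?thesis by (metis funpow_0)
  next
    case False
    then have "f x < x \<or> x < f x" using no_fix[of x] x by auto
    then show ?thesis using down up x by blast
  qed
qed

definition rotation_class :: "nat list \<Rightarrow> nat list set" where
  "rotation_class c = {rotate k c | k. True}"

lemma rotation_class_rotate: "rotation_class (rotate j xs) = rotation_class xs"
  unfolding rotation_class_def
proof (intro equalityI subsetI)
  fix ys
  assume "ys \<in> {rotate k (rotate j xs) | k. True}"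
  then show "ys \<in> {rotate k xs | k. True}" by (auto simp: rotate_rotate)
next
  fix ys
  assume "ys \<in> {rotate k xs | k. True}"
  then obtain k where ys: "ys = rotate k xs" by blast
  have "rotate (k + (length xs - 1) * j) (rotate j xs) = rotate (k + length xs * j) xs"
    by (cases "length xs") (simp_all add: rotate_rotate algebra_simps)
  also have "\<dots> = rotate k xs"
    by (metis mod_mult_self2 rotate_conv_mod)
  finally have "ys = rotate (k + (length xs - 1) * j) (rotate j xs)" using ys by simp
  then show "ys \<in> {rotate k (rotate j xs) | k. True}" by blast
qed

lemma kupisch_cyclic_rotate:
  assumes "kupisch_cyclic n c"
  shows "kupisch_cyclic n (rotate k c)"
  unfolding kupisch_cyclic_def
proof (intro conjI allI impI)
  have n: "length c = n" "n \<ge> 1" using assms unfolding kupisch_cyclic_def by auto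
  then show "length (rotate k c) = n" "1 \<le> n" by simp_all
  fix i
  assume i: "i < n"
  have nth: "rotate k c ! j = c ! ((k + j) mod n)" if "j < n" for j
    using that n by (simp add: nth_rotate)
  show "2 \<le> rotate k c ! i"
    using assms i n unfolding kupisch_cyclic_def nth[OF i] by simp
  have "(i + 1) mod n < n" using n by simp
  moreover have "(k + (i + 1) mod n) mod n = ((k + i) mod n + 1) mod n"
    by (metis add.assoc mod_add_left_eq mod_add_right_eq)
  ultimately show "rotate k c ! i - 1 \<le> rotate k c ! ((i + 1) mod n)"
    using assms n unfolding kupisch_cyclic_def nth[OF i] by (simp add: nth)
qed

definition normal_kupisch :: "nat \<Rightarrow> nat list \<Rightarrow> bool" where
  "normal_kupisch n c \<longleftrightarrow> kupisch_cyclic n c \<and> c ! 0 = n \<and> (\<forall>x. 0 < x \<and> x < n \<longrightarrow> c ! x \<noteq> n)"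

context cyclic_kupisch
begin

lemma global_attractor_unique:
  assumes "global_attractor n c x0" "x < n" "c ! x = n"
  shows "x = x0"
proof -
  have "(ebar ^^ m) x = x" for m
    by (induction m) (use assms(2,3) in \<open>auto simp: proj_end_mod_def\<close>)
  then show ?thesis using assms unfolding global_attractor_def by metis
qed

lemma e_ge_n_if_c0: "c ! 0 = n \<Longrightarrow> n \<le> e x"
  using e_mono[of 0 x] by (simp add: proj_end_def)

text \<open>When \<open>c\<^sub>0 = n\<close>, the map \<open>x \<mapsto> e x - n\<close> is a monotone self-map of \<open>[0, n]\<close> fixing both
  ends, whose inner fixed points are the other vertices \<open>x\<close> with \<open>c\<^sub>x = n\<close>.\<close>

lemma global_attractor_0_iff:
  "global_attractor n c 0 \<longleftrightarrow> c ! 0 = n \<and> (\<forall>x. 0 < x \<and> x < n \<longrightarrow> c ! x \<noteq> n)"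
proof
  assume attractor: "global_attractor n c 0"
  have "c ! x \<noteq> n" if "0 < x" "x < n" for x
    using global_attractor_unique[OF attractor that(2)] that(1) by auto
  then show "c ! 0 = n \<and> (\<forall>x. 0 < x \<and> x < n \<longrightarrow> c ! x \<noteq> n)"
    using attractor unfolding global_attractor_def by simp
next
  assume c0: "c ! 0 = n \<and> (\<forall>x. 0 < x \<and> x < n \<longrightarrow> c ! x \<noteq> n)"
  define f where "f x = e x - n" for x
  have e_funpow: "(e ^^ m) y = (f ^^ m) y + m * n" for m y
  proof (induction m)
    case (Suc m)
    have "(e ^^ Suc m) y = e ((f ^^ m) y) + m * n" using Suc e_add_mult by simp
    moreover have "e ((f ^^ m) y) = f ((f ^^ m) y) + n"
      using e_ge_n_if_c0[of "(f ^^ m) y"] c0 by (simp add: f_def)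
    ultimately show ?case by simp
  qed simp
  have to_0: "(ebar ^^ m) y = 0" if "y < n" "(f ^^ m) y = 0 \<or> (f ^^ m) y = n" for m y
    using that e_funpow_mod[of m y] e_funpow[of m y] by auto
  have reach: "\<exists>m. (f ^^ m) y = 0 \<or> (f ^^ m) y = n" if "y < n" for y
  proof (rule mono_orbit_reaches_end)
    show "f x \<le> f x'" if "x \<le> x'" for x x' using e_mono[OF that] by (simp add: f_def)
    show "f 0 = 0" "f n = n"
      using c0 e_add_mult[of 0 1] by (simp_all add: f_def proj_end_def)
    show "f x \<noteq> x" if "0 < x" "x < n" for x
      using that c0 e_ge_n_if_c0[of x] by (auto simp: f_def e_less)
  qed (use that in simp)
  have "\<exists>m. (ebar ^^ m) y = 0" if "y < n" for y
    using reach[OF that] to_0[OF that] by blast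
  then show "global_attractor n c 0"
    unfolding global_attractor_def using c0 n_pos by simp
qed

lemma normal_kupisch_rotate:
  assumes "global_attractor n c x0"
  shows "normal_kupisch n (rotate x0 c)"
proof -
  have x0: "x0 < n" "c ! x0 = n" using assms unfolding global_attractor_def by auto
  have nth: "rotate x0 c ! j = c ! ((x0 + j) mod n)" if "j < n" for j
    using that length_c by (simp add: nth_rotate)
  have "x = 0" if "x < n" "rotate x0 c ! x = n" for x
  proof -
    have "(x0 + x) mod n = x0"
      using global_attractor_unique[OF assms, of "(x0 + x) mod n"] that nth n_pos by simp
    then show ?thesis using that x0 by (cases "x0 + x < n") (auto simp: le_mod_geq)
  qed
  then show ?thesis
    unfolding normal_kupisch_def using kupisch_cyclic_rotate[OF kupisch] nth[of 0] x0 n_pos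
    by fastforce
qed

end

lemma normal_kupisch_iff: "normal_kupisch n c \<longleftrightarrow> kupisch_cyclic n c \<and> global_attractor n c 0"
  using cyclic_kupisch.global_attractor_0_iff cyclic_kupisch.intro
  unfolding normal_kupisch_def by blast

section \<open>Ballot lists\<close>

definition ballot_lists :: "nat \<Rightarrow> nat \<Rightarrow> nat list set" where
  "ballot_lists m v =
     {xs. length xs = m \<and> sorted xs \<and> (\<forall>x\<in>set xs. x \<le> v) \<and> (\<forall>i<m. xs ! i \<noteq> Suc i)}"

fun ballot_count :: "nat \<Rightarrow> nat \<Rightarrow> nat" where
  "ballot_count 0 v = 1"
| "ballot_count (Suc m) v = (\<Sum>w\<le>v. if w = Suc m then 0 else ballot_count m w)"

lemma ballot_count_Suc_Suc:
  "ballot_count (Suc m) (Suc v) =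
    ballot_count (Suc m) v + (if Suc v = Suc m then 0 else ballot_count m (Suc v))"
  by simp

lemma ballot_count_Suc_0: "ballot_count (Suc m) 0 = ballot_count m 0"
  by simp

declare ballot_count.simps(2) [simp del]

lemma finite_ballot_lists: "finite (ballot_lists m v)"
proof (rule finite_subset)
  show "ballot_lists m v \<subseteq> {xs. set xs \<subseteq> {..v} \<and> length xs = m}"
    unfolding ballot_lists_def by auto
  show "finite {xs. set xs \<subseteq> {..v} \<and> length xs = m}"
    by (rule finite_lists_length_eq) simp
qed

lemma ballot_lists_0: "ballot_lists 0 v = {[]}"
  unfolding ballot_lists_def by auto

lemma ballot_lists_Suc:
  "ballot_lists (Suc m) v =
    (\<Union>w\<in>{w. w \<le> v \<and> w \<noteq> Suc m}. (\<lambda>xs. xs @ [w]) ` ballot_lists m w)"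
proof (intro equalityI subsetI)
  fix xs
  assume xs: "xs \<in> ballot_lists (Suc m) v"
  then have "length xs = Suc m" unfolding ballot_lists_def by simp
  then obtain ys w where yw: "xs = ys @ [w]" "length ys = m"
    by (metis length_Suc_conv_rev)
  have "sorted (ys @ [w])" using xs yw unfolding ballot_lists_def by simp
  then have s: "sorted ys" "\<forall>y\<in>set ys. y \<le> w" by (auto simp: sorted_append)
  have wv: "w \<le> v" using xs yw unfolding ballot_lists_def by simp
  have wm: "w \<noteq> Suc m" using xs yw unfolding ballot_lists_def by (auto dest: spec[of _ m])
  have "\<forall>i<m. ys ! i \<noteq> Suc i"
  proof (intro allI impI)
    fix i
    assume "i < m"
    then show "ys ! i \<noteq> Suc i"
      using xs yw unfolding ballot_lists_def by (auto simp: nth_append dest!: spec[of _ i])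
  qed
  then have "ys \<in> ballot_lists m w" using s yw unfolding ballot_lists_def by simp
  then show "xs \<in> (\<Union>w\<in>{w. w \<le> v \<and> w \<noteq> Suc m}. (\<lambda>xs. xs @ [w]) ` ballot_lists m w)"
    using yw wv wm by blast
next
  fix xs
  assume "xs \<in> (\<Union>w\<in>{w. w \<le> v \<and> w \<noteq> Suc m}. (\<lambda>xs. xs @ [w]) ` ballot_lists m w)"
  then obtain w ys where w: "w \<le> v" "w \<noteq> Suc m" and ys: "ys \<in> ballot_lists m w"
    and xs: "xs = ys @ [w]" by blast
  have "\<forall>i<Suc m. xs ! i \<noteq> Suc i"
  proof (intro allI impI)
    fix i
    assume "i < Suc m"
    then consider "i < m" | "i = m" by linarith
    then show "xs ! i \<noteq> Suc i"
      by cases (use ys xs w in \<open>auto simp: ballot_lists_def nth_append\<close>)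
  qed
  then show "xs \<in> ballot_lists (Suc m) v"
    using ys xs w unfolding ballot_lists_def by (auto simp: sorted_append)
qed

lemma card_ballot_lists: "card (ballot_lists m v) = ballot_count m v"
proof (induction m arbitrary: v)
  case 0
  then show ?case by (simp add: ballot_lists_0)
next
  case (Suc m)
  let ?I = "{w. w \<le> v \<and> w \<noteq> Suc m}"
  have "card (ballot_lists (Suc m) v) = (\<Sum>w\<in>?I. card ((\<lambda>xs. xs @ [w]) ` ballot_lists m w))"
    unfolding ballot_lists_Suc by (rule card_UN_disjoint) (auto simp: finite_ballot_lists)
  also have "\<dots> = (\<Sum>w\<in>?I. ballot_count m w)"
    by (rule sum.cong) (auto simp: card_image inj_on_def Suc.IH)
  also have "\<dots> = (\<Sum>w\<le>v. if w = Suc m then 0 else ballot_count m w)"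
    by (rule sum.mono_neutral_cong_left) auto
  finally show ?case by (simp add: ballot_count.simps(2))
qed

definition catalan_triangle :: "nat \<Rightarrow> nat \<Rightarrow> rat" where
  "catalan_triangle p q = of_nat (p - q + 1) * of_nat (p + q choose q) / of_nat (p + 1)"

lemma catalan_triangle_0: "catalan_triangle p 0 = 1"
  unfolding catalan_triangle_def by simp

lemma catalan_triangle_rec_field_identity:
  fixes P Q X :: rat
  assumes "P \<ge> 0" "Q \<ge> 0"
  shows "(P - Q + 1) * (X + (P + 1) * X / (Q + 1)) / (P + 2) =
    (P - Q) * ((P + 1) * X / (Q + 1)) / (P + 1) + (P - Q + 2) * X / (P + 2)"
proof -
  have nz: "P + 1 \<noteq> 0" "P + 2 \<noteq> 0" "Q + 1 \<noteq> 0" using assms by auto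
  have lhs: "(P - Q + 1) * (X + (P + 1) * X / (Q + 1)) / (P + 2) =
      X * ((P - Q + 1) * (P + Q + 2)) / ((Q + 1) * (P + 2))"
    using nz by (simp add: field_simps)
  have "(P - Q) * ((P + 1) * X / (Q + 1)) / (P + 1) = ((P + 1) * ((P - Q) * X / (Q + 1))) / (P + 1)"
    by (simp add: algebra_simps)
  also have "\<dots> = (P - Q) * X / (Q + 1)" using nz(1) by (rule nonzero_mult_div_cancel_left)
  finally have rhs1: "(P - Q) * ((P + 1) * X / (Q + 1)) / (P + 1) = (P - Q) * X / (Q + 1)" .
  have rhs2: "(P - Q) * X / (Q + 1) + (P - Q + 2) * X / (P + 2) =
      ((P - Q) * X * (P + 2) + (P - Q + 2) * X * (Q + 1)) / ((Q + 1) * (P + 2))"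
    by (rule add_frac_eq[OF nz(3) nz(2)])
  have num: "X * ((P - Q + 1) * (P + Q + 2)) = (P - Q) * X * (P + 2) + (P - Q + 2) * X * (Q + 1)"
    by (simp add: algebra_simps)
  show ?thesis unfolding lhs rhs1 rhs2 num ..
qed

lemma catalan_triangle_Suc_Suc:
  assumes "q < p"
  shows "catalan_triangle (Suc p) (Suc q) = catalan_triangle p (Suc q) + catalan_triangle (Suc p) q"
proof -
  define X where "X = (p + q + 1) choose q"
  define Y where "Y = (p + q + 1) choose (Suc q)"
  have XY: "(Suc p + Suc q) choose (Suc q) = X + Y"
    unfolding X_def Y_def by (simp add: add.commute add.left_commute)
  have "Suc q * Y = (p + q + 1) * ((p + q) choose q)"
    unfolding Y_def using binomial_absorption[of q "p + q + 1"] by simp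
  moreover have "(p + q + 1 - q) * X = (p + q + 1) * ((p + q) choose q)"
    unfolding X_def using binomial_absorb_comp[of "p + q + 1" q] by simp
  ultimately have YX: "Suc q * Y = (p + 1) * X" by simp
  have "(of_nat q + 1) * (of_nat Y :: rat) = (of_nat p + 1) * of_nat X"
    using arg_cong[OF YX, of "of_nat :: nat \<Rightarrow> rat"] by (simp add: algebra_simps)
  then have Y: "(of_nat Y :: rat) = (of_nat p + 1) * of_nat X / (of_nat q + 1)"
    by (simp add: field_simps)
  have "catalan_triangle (Suc p) (Suc q) =
      (of_nat p - of_nat q + 1) * (of_nat X + of_nat Y) / (of_nat p + 2)"
    unfolding catalan_triangle_def XY using assms by (simp add: of_nat_diff algebra_simps)
  moreover have "catalan_triangle p (Suc q) = (of_nat p - of_nat q) * of_nat Y / (of_nat p + 1)"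
    unfolding catalan_triangle_def Y_def using assms
    by (simp add: of_nat_diff add.commute add.left_commute)
  moreover have "catalan_triangle (Suc p) q = (of_nat p - of_nat q + 2) * of_nat X / (of_nat p + 2)"
    unfolding catalan_triangle_def X_def using assms
    by (simp add: of_nat_diff add.commute add.left_commute)
  ultimately show ?thesis
    unfolding Y by (simp only:) (rule catalan_triangle_rec_field_identity, simp_all)
qed

lemma binomial_double_Suc: "(Suc r + Suc r) choose (Suc r) = 2 * (Suc (2 * r) choose r)"
proof -
  have sym: "Suc (2 * r) choose (Suc r) = Suc (2 * r) choose r"
    using binomial_symmetric[of "Suc r" "Suc (2 * r)"] by (simp del: binomial_Suc_Suc)
  have "Suc r + Suc r = Suc (Suc (2 * r))" by simp
  then have "(Suc r + Suc r) choose (Suc r) = (Suc (2 * r) choose r) + (Suc (2 * r) choose Suc r)"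
    by (simp only: binomial_Suc_Suc)
  then show ?thesis unfolding sym by simp
qed

lemma catalan_triangle_diag: "catalan_triangle (Suc r) (Suc r) = catalan_triangle (Suc r) r"
proof -
  have double: "Suc r + r = Suc (2 * r)" by simp
  have "catalan_triangle (Suc r) (Suc r) = of_nat (2 * (Suc (2 * r) choose r)) / of_nat (Suc r + 1)"
    unfolding catalan_triangle_def binomial_double_Suc by (simp del: binomial_Suc_Suc)
  also have "\<dots> = catalan_triangle (Suc r) r"
    unfolding catalan_triangle_def double by (simp del: binomial_Suc_Suc add: Suc_diff_le)
  finally show ?thesis .
qed

lemma ballot_count_eq_catalan_triangle:
  "of_nat (ballot_count m v) = (if v \<le> m then catalan_triangle m v else catalan_triangle v m)"
proof (induction m arbitrary: v)
  case 0
  then show ?case by (simp add: catalan_triangle_0)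
next
  case (Suc m)
  note outer = Suc.IH
  show ?case
  proof (induction v)
    case 0
    then show ?case using outer[of 0] by (simp add: catalan_triangle_0 ballot_count_Suc_0)
  next
    case (Suc v)
    consider "v < m" | "v = m" | "m < v" by linarith
    then show ?case
    proof cases
      case 1
      then show ?thesis
        using Suc.IH outer[of "Suc v"] catalan_triangle_Suc_Suc[OF 1]
        by (simp add: ballot_count_Suc_Suc)
    next
      case 2
      then show ?thesis using Suc.IH catalan_triangle_diag[of m] by (simp add: ballot_count_Suc_Suc)
    next
      case 3
      then show ?thesis
        using Suc.IH outer[of "Suc v"] catalan_triangle_Suc_Suc[OF 3]
        by (cases "v = Suc m") (simp_all add: ballot_count_Suc_Suc)
    qed
  qed
qed

lemma ballot_count_Suc_diag: "ballot_count r (Suc r) * (r + 2) = (Suc r + Suc r) choose (Suc r)"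
proof -
  have double: "Suc r + r = Suc (2 * r)" by simp
  have "catalan_triangle (Suc r) r = 2 * of_nat (Suc (2 * r) choose r) / (of_nat r + 2)"
    unfolding catalan_triangle_def double by (simp del: binomial_Suc_Suc add: Suc_diff_le)
  moreover have "(of_nat (ballot_count r (Suc r)) :: rat) = catalan_triangle (Suc r) r"
    using ballot_count_eq_catalan_triangle[of r "Suc r"] by simp
  ultimately have "(of_nat (ballot_count r (Suc r)) :: rat) * (of_nat r + 2) =
      2 * of_nat (Suc (2 * r) choose r)"
    by (simp add: field_simps)
  then have "(of_nat (ballot_count r (Suc r) * (r + 2)) :: rat) =
      of_nat (2 * (Suc (2 * r) choose r))"
    by (simp add: algebra_simps)
  then have "ballot_count r (Suc r) * (r + 2) = 2 * (Suc (2 * r) choose r)"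
    by (simp only: of_nat_eq_iff)
  then show ?thesis using binomial_double_Suc[of r] by simp
qed

lemma card_ballot_lists_catalan:
  assumes "n \<ge> 1"
  shows "card (ballot_lists (n - 1) n) = catalan n"
proof -
  obtain r where r: "n = Suc r" using assms by (cases n) auto
  have "(2 * n) choose n = ballot_count r (Suc r) * (n + 1)"
    using ballot_count_Suc_diag[of r] r by (simp del: binomial_Suc_Suc add: mult_2)
  then have "catalan n = ballot_count r (Suc r)"
    unfolding catalan_def by (simp only: nonzero_mult_div_cancel_right[of "n + 1"])
  then show ?thesis using card_ballot_lists r by simp
qed

text \<open>Entry \<open>i\<close> of \<open>kupisch_to_ballot n c\<close> is \<open>e (i + 1) - n\<close>. The excluded diagonal values
  \<open>xs\<^sub>i = i + 1\<close> correspond to \<open>c\<^sub>i\<^sub>+\<^sub>1 = n\<close>, and the zero list would give \<open>c\<^sub>n\<^sub>-\<^sub>1 = 1\<close>.\<close>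

definition kupisch_to_ballot :: "nat \<Rightarrow> nat list \<Rightarrow> nat list" where
  "kupisch_to_ballot n c = map (\<lambda>i. Suc i + c ! Suc i - n) [0..<n - 1]"

definition ballot_to_kupisch :: "nat \<Rightarrow> nat list \<Rightarrow> nat list" where
  "ballot_to_kupisch n xs = n # map (\<lambda>i. n + xs ! i - Suc i) [0..<n - 1]"

lemma kupisch_to_ballot_nth: "i < n - 1 \<Longrightarrow> kupisch_to_ballot n c ! i = Suc i + c ! Suc i - n"
  unfolding kupisch_to_ballot_def by simp

lemma ballot_to_kupisch_nth:
  "ballot_to_kupisch n xs ! 0 = n"
  "i < n - 1 \<Longrightarrow> ballot_to_kupisch n xs ! Suc i = n + xs ! i - Suc i"
  unfolding ballot_to_kupisch_def by simp_all

lemma length_ballot_to_kupisch: "n \<ge> 1 \<Longrightarrow> length (ballot_to_kupisch n xs) = n"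
  unfolding ballot_to_kupisch_def by simp

context cyclic_kupisch
begin

lemma kupisch_to_ballot_mem:
  assumes "normal_kupisch n c"
  shows "kupisch_to_ballot n c \<in> ballot_lists (n - 1) n - {replicate (n - 1) 0}"
proof -
  have c0: "c ! 0 = n" and no_n: "\<And>x. 0 < x \<Longrightarrow> x < n \<Longrightarrow> c ! x \<noteq> n"
    using assms unfolding normal_kupisch_def by auto
  have n2: "n \<ge> 2" using c_ge_2[of 0] n_pos c0 by simp
  let ?xs = "kupisch_to_ballot n c"
  have entry: "?xs ! i = e (Suc i) - n" if "i < n - 1" for i
    using that by (simp add: kupisch_to_ballot_nth e_less)
  have "sorted ?xs"
    unfolding sorted_iff_nth_mono
  proof (intro allI impI)
    fix i j
    assume ij: "i \<le> j" "j < length ?xs"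
    then have "e (Suc i) \<le> e (Suc j)" by (intro e_mono) simp
    moreover have "j < n - 1" using ij(2) by (simp add: kupisch_to_ballot_def)
    ultimately show "?xs ! i \<le> ?xs ! j"
      using ij(1) entry[of i] entry[of j] by simp
  qed
  moreover have "x \<le> n" if "x \<in> set ?xs" for x
  proof -
    obtain i where i: "i < n - 1" "x = ?xs ! i"
      using \<open>x \<in> set ?xs\<close> by (auto simp: kupisch_to_ballot_def in_set_conv_nth)
    have "e (Suc i) \<le> e n" using i by (intro e_mono) simp
    also have "\<dots> = 2 * n" using e_add_mult[of 0 1] c0 by (simp add: proj_end_def)
    finally show ?thesis using i entry by simp
  qed
  moreover have "?xs ! i \<noteq> Suc i" if "i < n - 1" for i
  proof
    assume "?xs ! i = Suc i"
    moreover have "n \<le> Suc i + c ! Suc i"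
      using e_ge_n_if_c0[OF c0, of "Suc i"] that by (simp add: e_less)
    ultimately have "c ! Suc i = n" using that by (simp add: kupisch_to_ballot_nth)
    then show False using no_n[of "Suc i"] that by simp
  qed
  moreover have "?xs \<noteq> replicate (n - 1) 0"
  proof
    have "n - 2 < n - 1" "Suc (n - 2) = n - 1" using n2 by auto
    then have "?xs ! (n - 2) = e (n - 1) - n" using entry[of "n - 2"] by simp
    also have "\<dots> \<noteq> 0" using c_ge_2[of "n - 1"] e_less[of "n - 1"] n2 by simp
    finally show "?xs = replicate (n - 1) 0 \<Longrightarrow> False" using \<open>n - 2 < n - 1\<close> by simp
  qed
  moreover have "length ?xs = n - 1" by (simp add: kupisch_to_ballot_def)
  ultimately show ?thesis unfolding ballot_lists_def by blast
qed

lemma ballot_to_kupisch_to_ballot: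
  assumes "normal_kupisch n c"
  shows "ballot_to_kupisch n (kupisch_to_ballot n c) = c"
proof (rule nth_equalityI)
  have c0: "c ! 0 = n" using assms unfolding normal_kupisch_def by simp
  show "length (ballot_to_kupisch n (kupisch_to_ballot n c)) = length c"
    using length_ballot_to_kupisch n_pos length_c by simp
  fix i
  assume "i < length (ballot_to_kupisch n (kupisch_to_ballot n c))"
  then have i: "i < n" using length_ballot_to_kupisch n_pos by simp
  show "ballot_to_kupisch n (kupisch_to_ballot n c) ! i = c ! i"
  proof (cases i)
    case 0
    then show ?thesis using c0 ballot_to_kupisch_nth by simp
  next
    case (Suc j)
    then show ?thesis
      using i e_ge_n_if_c0[OF c0, of i] e_less[of i]
      by (simp add: ballot_to_kupisch_nth kupisch_to_ballot_nth)
  qed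
qed

end

lemma kupisch_to_ballot_to_kupisch:
  assumes "xs \<in> ballot_lists (n - 1) n"
  shows "kupisch_to_ballot n (ballot_to_kupisch n xs) = xs"
proof (rule nth_equalityI)
  show "length (kupisch_to_ballot n (ballot_to_kupisch n xs)) = length xs"
    using assms unfolding kupisch_to_ballot_def ballot_lists_def by simp
  fix i
  assume "i < length (kupisch_to_ballot n (ballot_to_kupisch n xs))"
  then show "kupisch_to_ballot n (ballot_to_kupisch n xs) ! i = xs ! i"
    by (simp add: kupisch_to_ballot_def ballot_to_kupisch_nth)
qed

lemma kupisch_cyclic_ballot_to_kupisch:
  assumes xs: "xs \<in> ballot_lists (n - 1) n - {replicate (n - 1) 0}"
  shows "kupisch_cyclic n (ballot_to_kupisch n xs)"
proof -
  have len: "length xs = n - 1" and sorted: "sorted xs" and bound: "\<forall>x\<in>set xs. x \<le> n"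
    and nonzero: "xs \<noteq> replicate (n - 1) 0"
    using xs by (simp_all add: ballot_lists_def)
  have n2: "n \<ge> 2" using len nonzero by (cases "n - 1") auto
  let ?c = "ballot_to_kupisch n xs"
  have c_Suc: "?c ! Suc j = n + xs ! j - Suc j" if "j < n - 1" for j
    using ballot_to_kupisch_nth that by simp
  have mono: "xs ! j \<le> xs ! k" if "j \<le> k" "k < n - 1" for j k
    using sorted_nth_mono[OF sorted that(1)] that len by simp
  have last_pos: "xs ! (n - 2) \<ge> 1"
  proof (rule ccontr)
    assume "\<not> xs ! (n - 2) \<ge> 1"
    moreover have "xs ! k \<le> xs ! (n - 2)" if "k < n - 1" for k
      using mono[of k "n - 2"] that n2 by simp
    ultimately have "xs ! k = 0" if "k < n - 1" for k
      using that by fastforce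
    then have "xs = replicate (n - 1) 0" using len by (simp add: list_eq_iff_nth_eq)
    then show False using nonzero by simp
  qed
  show ?thesis
    unfolding kupisch_cyclic_def
  proof (intro conjI allI impI)
    show "length ?c = n" "1 \<le> n" using length_ballot_to_kupisch n2 by simp_all
    fix i
    assume i: "i < n"
    show "2 \<le> ?c ! i"
    proof (cases i)
      case 0
      then show ?thesis using n2 ballot_to_kupisch_nth by simp
    next
      case (Suc j)
      have j: "j < n - 1" using i Suc by simp
      show ?thesis
      proof (cases "Suc j < n - 1")
        case True
        then show ?thesis using c_Suc[OF j] Suc by simp
      next
        case False
        then have "j = n - 2" using j by simp
        then show ?thesis using c_Suc[OF j] Suc last_pos n2 by simp
      qed
    qed
    show "?c ! i - 1 \<le> ?c ! ((i + 1) mod n)"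
    proof (cases "i + 1 < n")
      case True
      show ?thesis
      proof (cases i)
        case 0
        then show ?thesis using c_Suc[of 0] n2 ballot_to_kupisch_nth(1) by simp
      next
        case (Suc j)
        have "Suc j < n - 1" using True Suc by simp
        moreover have "xs ! j \<le> xs ! Suc j" using mono calculation by simp
        ultimately show ?thesis using c_Suc[of j] c_Suc[of "Suc j"] Suc by simp
      qed
    next
      case False
      then have "i + 1 = n" using i by simp
      then have "i = Suc (n - 2)" "(i + 1) mod n = 0" using n2 by auto
      moreover have "xs ! (n - 2) \<le> n" using bound len n2 by (simp add: nth_mem)
      ultimately show ?thesis using c_Suc[of "n - 2"] n2 ballot_to_kupisch_nth(1) by simp
    qed
  qed
qed

lemma normal_kupisch_ballot_to_kupisch:
  assumes xs: "xs \<in> ballot_lists (n - 1) n - {replicate (n - 1) 0}"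
  shows "normal_kupisch n (ballot_to_kupisch n xs)"
proof -
  have "ballot_to_kupisch n xs ! x \<noteq> n" if x: "0 < x" "x < n" for x
  proof -
    obtain j where j: "x = Suc j" "j < n - 1" using x by (cases x) auto
    have "xs ! j \<noteq> Suc j" "xs ! j \<le> n"
      using xs j by (simp_all add: ballot_lists_def nth_mem)
    then show ?thesis using j by (simp add: ballot_to_kupisch_nth)
  qed
  then show ?thesis
    unfolding normal_kupisch_def
    using kupisch_cyclic_ballot_to_kupisch[OF xs] ballot_to_kupisch_nth(1) by simp
qed

lemma bij_betw_kupisch_to_ballot:
  "bij_betw (kupisch_to_ballot n) {c. normal_kupisch n c}
     (ballot_lists (n - 1) n - {replicate (n - 1) 0})"
proof (rule bij_betw_byWitness[where f' = "ballot_to_kupisch n"])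
  have cyclic: "cyclic_kupisch n c" if "normal_kupisch n c" for c
    using that unfolding normal_kupisch_def by (simp add: cyclic_kupisch.intro)
  show "\<forall>c\<in>{c. normal_kupisch n c}. ballot_to_kupisch n (kupisch_to_ballot n c) = c"
    using cyclic_kupisch.ballot_to_kupisch_to_ballot[OF cyclic] by simp
  show "kupisch_to_ballot n ` {c. normal_kupisch n c}
      \<subseteq> ballot_lists (n - 1) n - {replicate (n - 1) 0}"
    using cyclic_kupisch.kupisch_to_ballot_mem[OF cyclic] by auto
  show "\<forall>xs\<in>ballot_lists (n - 1) n - {replicate (n - 1) 0}.
      kupisch_to_ballot n (ballot_to_kupisch n xs) = xs"
    using kupisch_to_ballot_to_kupisch by simp
  show "ballot_to_kupisch n ` (ballot_lists (n - 1) n - {replicate (n - 1) 0})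
      \<subseteq> {c. normal_kupisch n c}"
    using normal_kupisch_ballot_to_kupisch by auto
qed

section \<open>Counting the classes\<close>

lemma inj_on_rotation_class: "inj_on rotation_class {c. normal_kupisch n c}"
proof (rule inj_onI)
  fix c c'
  assume "c \<in> {c. normal_kupisch n c}" "c' \<in> {c. normal_kupisch n c}"
    and same_class: "rotation_class c = rotation_class c'"
  then have normal: "normal_kupisch n c" "normal_kupisch n c'" by auto
  then interpret cyclic_kupisch n c unfolding normal_kupisch_def by unfold_locales simp
  have "c' \<in> rotation_class c'"
    unfolding rotation_class_def by (metis (mono_tags) mem_Collect_eq rotate0 id_apply)
  then obtain k where "c' = rotate k c" using same_class unfolding rotation_class_def by auto
  then have c': "c' = rotate (k mod n) c" using length_c by (metis rotate_conv_mod)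
  have "c ! (k mod n) = c' ! 0" unfolding c' using length_c n_pos by (simp add: nth_rotate)
  moreover have "k mod n < n" using n_pos by simp
  ultimately have "k mod n = 0" using normal unfolding normal_kupisch_def by auto
  then show "c = c'" using c' by simp
qed

lemma good_cyclic_classes:
  "{(True, {rotate k c | k. True}) | c. kupisch_cyclic n c \<and> good True n c} =
    (\<lambda>c. (True, rotation_class c)) ` {c. normal_kupisch n c}"
proof (intro equalityI subsetI)
  fix C
  assume "C \<in> {(True, {rotate k c | k. True}) | c. kupisch_cyclic n c \<and> good True n c}"
  then obtain c where c: "kupisch_cyclic n c" "good True n c" and C: "C = (True, rotation_class c)"
    unfolding rotation_class_def by blast
  interpret cyclic_kupisch n c by unfold_locales (rule c(1))
  obtain x0 where "global_attractor n c x0" using c(2) good_cyclic_iff by blast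
  then have "normal_kupisch n (rotate x0 c)" by (rule normal_kupisch_rotate)
  moreover have "rotation_class (rotate x0 c) = rotation_class c"
    by (rule rotation_class_rotate)
  ultimately show "C \<in> (\<lambda>c. (True, rotation_class c)) ` {c. normal_kupisch n c}"
    unfolding C by (metis (mono_tags) image_eqI mem_Collect_eq)
next
  fix C
  assume "C \<in> (\<lambda>c. (True, rotation_class c)) ` {c. normal_kupisch n c}"
  then obtain c where c: "normal_kupisch n c" and C: "C = (True, rotation_class c)" by blast
  then have "kupisch_cyclic n c" "good True n c"
    using cyclic_kupisch.good_cyclic_iff[OF cyclic_kupisch.intro] unfolding normal_kupisch_iff
    by blast+
  then show "C \<in> {(True, {rotate k c | k. True}) | c. kupisch_cyclic n c \<and> good True n c}"
    unfolding C rotation_class_def by blast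
qed

lemma finite_normal_kupisch: "finite {c. normal_kupisch n c}"
  using bij_betw_finite[OF bij_betw_kupisch_to_ballot] finite_ballot_lists by blast

lemma card_normal_kupisch:
  assumes "n \<ge> 1"
  shows "card {c. normal_kupisch n c} + 1 = catalan n"
proof -
  have zero: "replicate (n - 1) 0 \<in> ballot_lists (n - 1) n" unfolding ballot_lists_def by auto
  have "card {c. normal_kupisch n c} = card (ballot_lists (n - 1) n - {replicate (n - 1) 0})"
    by (rule bij_betw_same_card[OF bij_betw_kupisch_to_ballot])
  also have "\<dots> = card (ballot_lists (n - 1) n) - 1" using zero by simp
  finally show ?thesis
    using card_ballot_lists_catalan[OF assms] finite_ballot_lists zero
    by (metis Suc_diff_1 Suc_eq_plus1 card_gt_0_iff empty_iff)
qed

theorem corollary4p5: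
  fixes n :: nat
  assumes "n \<ge> 1"
  shows "finite (nakayama_classes_good n) \<and> card (nakayama_classes_good n) = catalan n"
proof -
  let ?cyclic = "(\<lambda>c. (True, rotation_class c)) ` {c. normal_kupisch n c}"
  have classes: "nakayama_classes_good n = insert (False, {hereditary_kupisch n}) ?cyclic"
    unfolding nakayama_classes_good_def good_linear_classes[OF assms] good_cyclic_classes by simp
  have "finite ?cyclic" using finite_normal_kupisch by simp
  moreover have "card ?cyclic = card {c. normal_kupisch n c}"
    using inj_on_rotation_class by (simp add: card_image inj_on_def)
  moreover have "(False, {hereditary_kupisch n}) \<notin> ?cyclic" by auto
  ultimately show ?thesis
    unfolding classes using card_normal_kupisch[OF assms] by simp
qed

end
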